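(* Let $f:\mathbb{R}^d\to\mathbb{R}$ and $\phi:\mathbb{R}\to\mathbb{R}$ be twice differentiable and let $L\coloneqq\phi\circ f$. Let $\alpha_\phi(x)$ be a Newton stepsize schedule for $L$. Define, wherever the expression is defined, \[ \alpha(x)\coloneqq\alpha_\phi(x)\left(1+\frac{\phi''(f(x))}{\phi'(f(x))}\,\|\nabla f(x)\|_x^{*2}\right)^{-1}. \] Assume $\nabla f(x)\in\mathrm{Range}(\nabla^2 f(x))$ at every point $x$ where a step is taken. Then the Newton method on $f$ with stepsize schedule $\alpha(x)$ produces the identical sequence of iterates to the Newton method on $L$ with stepsize schedule $\alpha_\phi(x)$.
   Context: $\mathbf{B}^\dagger$ denotes the Moore–Penrose pseudoinverse. $\|g\|_x^{*2}\coloneqq\langle g,[\nabla^2 f(x)]^{\dagger}g\rangle$. The Newton method with stepsize schedule $\beta(\cdot)$ on a function $F$ is the iteration $x^{k+1}=x^k-\beta(x^k)[\nabla^2F(x^k)]^{\dagger}\nabla F(x^k)$, started from the same initial point for both methods. *)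

theory Defs
  imports "HOL-Analysis.Analysis"
begin

definition pinv :: "real^'n^'n \<Rightarrow> real^'n^'n" where
  "pinv A = (THE B. A ** B ** A = A \<and> B ** A ** B = B \<and>
                    transpose (A ** B) = A ** B \<and> transpose (B ** A) = B ** A)"

definition grad :: "(real^'n \<Rightarrow> real) \<Rightarrow> real^'n \<Rightarrow> real^'n" where
  "grad f x = (\<chi> i. frechet_derivative f (at x) (axis i 1))"

definition hess :: "(real^'n \<Rightarrow> real) \<Rightarrow> real^'n \<Rightarrow> real^'n^'n" where
  "hess f x = matrix (frechet_derivative (grad f) (at x))"

definition twice_differentiable :: "(real^'n \<Rightarrow> real) \<Rightarrow> bool" where
  "twice_differentiable f \<longleftrightarrow> (\<forall>x. f differentiable at x) \<and> (\<forall>x. grad f differentiable at x)"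

definition twice_differentiable_real :: "(real \<Rightarrow> real) \<Rightarrow> bool" where
  "twice_differentiable_real \<phi> \<longleftrightarrow> (\<forall>t. \<phi> differentiable at t) \<and> (\<forall>t. deriv \<phi> differentiable at t)"

definition dual_norm_sq :: "(real^'n \<Rightarrow> real) \<Rightarrow> real^'n \<Rightarrow> real^'n \<Rightarrow> real" where
  "dual_norm_sq f x g = g \<bullet> (pinv (hess f x) *v g)"

primrec newton :: "(real^'n \<Rightarrow> real) \<Rightarrow> (real^'n \<Rightarrow> real) \<Rightarrow> real^'n \<Rightarrow> nat \<Rightarrow> real^'n" where
  "newton F \<beta> x0 0 = x0"
| "newton F \<beta> x0 (Suc k) =
     (let x = newton F \<beta> x0 k in x - \<beta> x *\<^sub>R (pinv (hess F x) *v grad F x))"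

end

theory Submission
  imports Defs
begin

text \<open>
  By the chain rule, \<open>\<nabla>L = \<phi>'(f) \<nabla>f\<close> and \<open>\<nabla>\<^sup>2L = \<phi>'(f) \<nabla>\<^sup>2f + \<phi>''(f) \<nabla>f \<nabla>f\<^sup>T\<close>:
  the Hessian of \<open>L\<close> is a rank-one update of a multiple of the symmetric matrix \<open>H = \<nabla>\<^sup>2f\<close>.
  For \<open>g = \<nabla>f\<close> in the range of \<open>H\<close>, a Sherman--Morrison computation with pseudoinverses gives
  \<open>(\<nabla>\<^sup>2L)\<^sup>\<dagger> \<nabla>L = (1 + \<phi>''/\<phi>' \<cdot> g\<^sup>T H\<^sup>\<dagger> g)\<^sup>-\<^sup>1 H\<^sup>\<dagger> g\<close>, so the two Newton directions are
  parallel and the rescaled stepsize makes every step, hence every iterate, coincide.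
  Symmetry of \<open>H\<close> comes from a Schwarz-type argument on second differences.
\<close>

section \<open>Moore--Penrose pseudoinverse\<close>

declare transpose_matrix_vector [simp del]

lemma inner_matrix_vector_transpose:
  fixes A :: "real^'n^'m"
  shows "(A *v u) \<bullet> y = u \<bullet> (transpose A *v y)"
  by (metis dot_lmul_matrix inner_commute transpose_matrix_vector)

lemma symmetric_matrixI:
  fixes X :: "real^'n^'n"
  assumes "\<And>u v. (X *v u) \<bullet> v = u \<bullet> (X *v v)"
  shows "transpose X = X"
proof -
  have "X $ i $ j = X $ j $ i" for i j
    using assms[of "axis j 1" "axis i 1"]
    by (simp add: inner_axis inner_axis' matrix_vector_mult_basis column_def)
  then show ?thesis by (simp add: transpose_def vec_eq_iff)
qed

lemma transpose_mult_self_eq_0: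
  fixes A :: "real^'n^'m"
  assumes "transpose A *v (A *v d) = 0"
  shows "A *v d = 0"
proof -
  have "(A *v d) \<bullet> (A *v d) = 0"
    using assms by (simp add: inner_matrix_vector_transpose)
  then show ?thesis by simp
qed

lemma kernel_orthogonal_range_transpose:
  fixes A :: "real^'n^'m"
  shows "A *v z = 0 \<longleftrightarrow> (\<forall>y. z \<bullet> (transpose A *v y) = 0)"
proof
  assume "\<forall>y. z \<bullet> (transpose A *v y) = 0"
  then have "(A *v z) \<bullet> (A *v z) = 0"
    by (simp add: inner_matrix_vector_transpose)
  then show "A *v z = 0" by simp
qed (metis inner_matrix_vector_transpose inner_zero_left)

lemma range_kernel_transpose_decomp:
  fixes M :: "real^'n^'m"
  obtains y z where "x = M *v y + z" "transpose M *v z = 0"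
proof -
  have span_range: "span (range ((*v) M)) = range ((*v) M)"
    by (simp add: linear_subspace_image[OF matrix_vector_mul_linear subspace_UNIV])
  obtain p z where p: "p \<in> range ((*v) M)" and z: "\<And>w. w \<in> range ((*v) M) \<Longrightarrow> orthogonal z w"
    and x: "x = p + z"
    using orthogonal_subspace_decomp_exists[of "range ((*v) M)" x] span_range by metis
  obtain y where "p = M *v y" using p by blast
  moreover have "transpose M *v z = 0"
    using z kernel_orthogonal_range_transpose[of "transpose M" z] by (simp add: orthogonal_def)
  ultimately show ?thesis using that x by blast
qed

definition penrose :: "real^'n^'m \<Rightarrow> real^'m^'n \<Rightarrow> bool" where
  "penrose A B \<longleftrightarrow> A ** B ** A = A \<and> B ** A ** B = B \<and>
                    transpose (A ** B) = A ** B \<and> transpose (B ** A) = B ** A"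

lemma penroseI:
  fixes A :: "real^'n^'m" and B :: "real^'m^'n"
  assumes "\<And>x. A *v (B *v (A *v x)) = A *v x"
    and "\<And>y. B *v (A *v (B *v y)) = B *v y"
    and "\<And>u v. (A *v (B *v u)) \<bullet> v = u \<bullet> (A *v (B *v v))"
    and "\<And>u v. (B *v (A *v u)) \<bullet> v = u \<bullet> (B *v (A *v v))"
  shows "penrose A B"
  unfolding penrose_def
  by (intro conjI symmetric_matrixI iffD2[OF matrix_eq] allI)
    (simp_all add: assms matrix_vector_mul_assoc[symmetric])

lemma penrose_unique:
  assumes "penrose A B" "penrose A C"
  shows "B = C"
proof -
  have B: "A ** B ** A = A" "B ** A ** B = B" "transpose (A ** B) = A ** B" "transpose (B ** A) = B ** A"
    and C: "A ** C ** A = A" "C ** A ** C = C" "transpose (A ** C) = A ** C" "transpose (C ** A) = C ** A"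
    using assms by (auto simp: penrose_def)
  have "B = B ** transpose (A ** B)"
    using B(2,3) by (simp add: matrix_mul_assoc)
  also have "\<dots> = B ** transpose B ** transpose (A ** C ** A)"
    using C(1) by (simp add: matrix_transpose_mul matrix_mul_assoc)
  also have "\<dots> = B ** transpose (A ** B) ** transpose (A ** C)"
    by (simp add: matrix_transpose_mul matrix_mul_assoc)
  also have "\<dots> = B ** A ** C"
    using B(2,3) C(3) by (simp add: matrix_mul_assoc)
  finally have BAC: "B = B ** A ** C" .
  have "C = transpose (C ** A) ** C"
    using C(2,4) by (simp add: matrix_mul_assoc)
  also have "\<dots> = transpose (A ** B ** A) ** transpose C ** C"
    using B(1) by (simp add: matrix_transpose_mul matrix_mul_assoc)
  also have "\<dots> = transpose (B ** A) ** transpose (C ** A) ** C"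
    by (simp add: matrix_transpose_mul matrix_mul_assoc)
  also have "\<dots> = B ** A ** C"
    using B(4) C(2,4) by (simp add: matrix_mul_assoc[symmetric])
  finally show ?thesis using BAC by simp
qed

lemma gram_inj_on_range_transpose:
  fixes A :: "real^'n^'m"
  shows "inj_on (\<lambda>v. transpose A *v (A *v v)) (range ((*v) (transpose A)))"
proof (rule inj_onI)
  fix v v' assume "v \<in> range ((*v) (transpose A))" "v' \<in> range ((*v) (transpose A))"
    and eq: "transpose A *v (A *v v) = transpose A *v (A *v v')"
  then obtain y where y: "v - v' = transpose A *v y"
    by (metis matrix_vector_mult_diff_distrib rangeE)
  have "transpose A *v (A *v (v - v')) = 0"
    using eq by (simp add: matrix_vector_mult_diff_distrib)
  then have "A *v (v - v') = 0" by (rule transpose_mult_self_eq_0)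
  then have "(v - v') \<bullet> (v - v') = 0"
    using y kernel_orthogonal_range_transpose by metis
  then show "v = v'" by simp
qed

lemma range_transpose_gram_preimage:
  fixes A :: "real^'n^'m"
  obtains v where "transpose A *v y = transpose A *v (A *v (transpose A *v v))"
proof -
  obtain x q where "y = A *v x + q" "transpose A *v q = 0"
    by (rule range_kernel_transpose_decomp)
  moreover obtain v z where "x = transpose A *v v + z" "A *v z = 0"
    by (rule range_kernel_transpose_decomp[where M = "transpose A", unfolded transpose_transpose])
  ultimately show ?thesis
    using that by (simp add: matrix_vector_right_distrib)
qed

text \<open>The pseudoinverse is \<open>G \<circ> A\<^sup>T\<close>, where \<open>G\<close> inverts \<open>A\<^sup>T A\<close> on the range of \<open>A\<^sup>T\<close>.\<close>

lemma penrose_exists: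
  fixes A :: "real^'n^'m"
  shows "\<exists>B. penrose A B"
proof -
  let ?At = "transpose A"
  let ?K = "range ((*v) ?At)"
  have span_K: "span ?K = ?K"
    by (simp add: linear_subspace_image[OF matrix_vector_mul_linear subspace_UNIV])
  have "linear (\<lambda>v. ?At *v (A *v v))"
    by (simp add: matrix_vector_mul_assoc)
  then have "\<exists>G. range G \<subseteq> span ?K \<and> linear G \<and> (\<forall>v\<in>span ?K. G (?At *v (A *v v)) = v)"
    by (rule linear_inj_on_left_inverse) (simp only: span_K gram_inj_on_range_transpose)
  then obtain G where G_K: "\<And>y. G y \<in> ?K" and lin_G: "linear G"
      and G_inv: "\<And>v. v \<in> ?K \<Longrightarrow> G (?At *v (A *v v)) = v"
    unfolding span_K by blast
  define B where "B = matrix (\<lambda>y. G (?At *v y))"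
  have "linear (\<lambda>y. G (?At *v y))"
    using linear_compose[OF matrix_vector_mul_linear lin_G] by (simp add: o_def)
  then have Bv: "B *v y = G (?At *v y)" for y
    by (simp add: B_def matrix_works)
  have B_K: "B *v y \<in> ?K" for y
    by (simp only: Bv G_K)
  have gram_B: "?At *v (A *v (B *v y)) = ?At *v y" for y
  proof -
    obtain v where "?At *v y = ?At *v (A *v (?At *v v))"
      by (rule range_transpose_gram_preimage)
    then show ?thesis by (simp add: Bv G_inv)
  qed
  have ABA: "A *v (B *v (A *v x)) = A *v x" for x
    using transpose_mult_self_eq_0[of A "B *v (A *v x) - x"] gram_B[of "A *v x"]
    by (simp add: matrix_vector_mult_diff_distrib)
  have BAB: "B *v (A *v (B *v y)) = B *v y" for y
    by (subst Bv) (rule G_inv[OF B_K])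
  have AB_sym: "(A *v (B *v u)) \<bullet> v = (A *v (B *v u)) \<bullet> (A *v (B *v v))" for u v
  proof -
    have "(A *v (B *v u)) \<bullet> v = (B *v u) \<bullet> (?At *v v)"
      by (rule inner_matrix_vector_transpose)
    also have "\<dots> = (B *v u) \<bullet> (?At *v (A *v (B *v v)))"
      by (simp only: gram_B)
    finally show ?thesis
      by (simp only: inner_matrix_vector_transpose)
  qed
  have BA_sym: "(B *v (A *v u)) \<bullet> v = (B *v (A *v u)) \<bullet> (B *v (A *v v))" for u v
  proof -
    have "A *v (v - B *v (A *v v)) = 0"
      by (simp add: ABA matrix_vector_mult_diff_distrib)
    moreover obtain w where "B *v (A *v u) = ?At *v w"
      using B_K by blast
    ultimately have "(v - B *v (A *v v)) \<bullet> (B *v (A *v u)) = 0"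
      by (simp add: kernel_orthogonal_range_transpose)
    then show ?thesis by (simp add: inner_diff inner_commute)
  qed
  have "penrose A B"
  proof (rule penroseI)
    show "(A *v (B *v u)) \<bullet> v = u \<bullet> (A *v (B *v v))" for u v
      using AB_sym[of u v] AB_sym[of v u] by (simp add: inner_commute)
    show "(B *v (A *v u)) \<bullet> v = u \<bullet> (B *v (A *v v))" for u v
      using BA_sym[of u v] BA_sym[of v u] by (simp add: inner_commute)
  qed (simp_all add: ABA BAB)
  then show ?thesis ..
qed

lemma penrose_pinv: "penrose A (pinv A)"
proof -
  have "\<exists>!B. penrose A B"
    using penrose_exists penrose_unique by blast
  then show ?thesis
    unfolding pinv_def penrose_def[symmetric] by (rule theI')
qed

lemma penrose_symmetric_range:
  fixes A :: "real^'n^'n"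
  assumes "penrose A B" "transpose A = A"
  shows "B *v y = A *v (transpose B *v (B *v y))"
proof -
  have "B = transpose (B ** A) ** B"
    using assms(1) by (simp add: penrose_def)
  also have "\<dots> = A ** transpose B ** B"
    using assms(2) by (simp add: matrix_transpose_mul)
  finally show ?thesis
    by (metis matrix_vector_mul_assoc)
qed

lemma penrose_symmetric_cancel:
  fixes A :: "real^'n^'n"
  assumes "penrose A B" "transpose A = A"
  shows "B *v (A *v (A *v y)) = A *v y"
proof -
  have "B ** A ** A = transpose (B ** A) ** A"
    using assms(1) by (simp add: penrose_def)
  also have "\<dots> = transpose (A ** B ** A)"
    using assms(2) by (simp add: matrix_transpose_mul matrix_mul_assoc)
  also have "\<dots> = A"
    using assms by (simp add: penrose_def)
  finally show ?thesis
    by (metis matrix_vector_mul_assoc)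
qed

lemma transpose_add: "transpose (A + B) = transpose A + transpose B"
  by (simp add: transpose_def vec_eq_iff)

definition outer :: "real^'m \<Rightarrow> real^'n \<Rightarrow> real^'n^'m" where
  "outer u v = (\<chi> i j. u $ i * v $ j)"

lemma outer_mult_vector: "outer u v *v x = (v \<bullet> x) *\<^sub>R u"
  by (simp add: outer_def vec_eq_iff matrix_vector_mult_def inner_vec_def
      sum_distrib_left sum_distrib_right mult.commute mult.left_commute)

lemma transpose_outer: "transpose (outer u v) = outer v u"
  by (simp add: outer_def transpose_def vec_eq_iff mult.commute)

lemma pinv_rank_one_update:
  fixes H :: "real^'n^'n"
  assumes sym_H: "transpose H = H" and g: "g \<in> range ((*v) H)" and "b \<noteq> 0"
    and nz: "1 + a / b * (g \<bullet> (pinv H *v g)) \<noteq> 0"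
  shows "pinv (b *\<^sub>R H + a *\<^sub>R outer g g) *v (b *\<^sub>R g)
         = inverse (1 + a / b * (g \<bullet> (pinv H *v g))) *\<^sub>R (pinv H *v g)"
proof -
  define M where "M = b *\<^sub>R H + a *\<^sub>R outer g g"
  define s where "s = g \<bullet> (pinv H *v g)"
  define c where "c = inverse (1 + a / b * s)"
  define w where "w = c *\<^sub>R (pinv H *v g)"
  have pH: "penrose H (pinv H)"
    by (rule penrose_pinv)
  have Mv: "M *v v = b *\<^sub>R (H *v v) + (a * (g \<bullet> v)) *\<^sub>R g" for v
    by (simp add: M_def matrix_vector_mult_add_rdistrib scaleR_matrix_vector_assoc[symmetric]
        outer_mult_vector)
  have sym_M: "transpose M = M"
    by (simp add: M_def transpose_add transpose_scalar transpose_outer sym_H)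
  have H_pinv_g: "H *v (pinv H *v g) = g"
    using g pH by (auto simp: penrose_def matrix_vector_mul_assoc)
  have Mw: "M *v w = b *\<^sub>R g"
  proof -
    have "M *v w = (c * b + a * (c * s)) *\<^sub>R g"
      by (simp add: Mv w_def H_pinv_g s_def[symmetric] algebra_simps)
    also have "c * b + a * (c * s) = c * (b * (1 + a / b * s))"
      using \<open>b \<noteq> 0\<close> by (simp add: field_simps)
    also have "\<dots> = b"
      using nz by (simp add: c_def s_def)
    finally show ?thesis .
  qed
  \<comment> \<open>\<open>w\<close> lies in the range of \<open>M\<close>, on which \<open>pinv M\<close> inverts \<open>M\<close>; a preimage is built from \<open>z\<close>.\<close>
  obtain z where Hz: "H *v z = pinv H *v g"
    using penrose_symmetric_range[OF pH sym_H] by metis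
  define y where "y = (c / b) *\<^sub>R z - (c * a * (g \<bullet> z) / b\<^sup>2) *\<^sub>R w"
  have Mz: "M *v z = b *\<^sub>R (pinv H *v g) + (a * (g \<bullet> z)) *\<^sub>R g"
    by (simp add: Mv Hz)
  have "M *v y = c *\<^sub>R (pinv H *v g)"
    using \<open>b \<noteq> 0\<close>
    by (simp add: y_def Mz Mw algebra_simps power2_eq_square)
  then have My: "M *v y = w"
    by (simp add: w_def)
  have "pinv M *v (b *\<^sub>R g) = pinv M *v (M *v (M *v y))"
    by (simp add: My Mw)
  also have "\<dots> = w"
    using penrose_symmetric_cancel[OF penrose_pinv sym_M, of y] by (simp only: My)
  finally show ?thesis
    by (simp add: M_def w_def c_def s_def)
qed

section \<open>Gradient and Hessian\<close>

lemma second_difference_mean_value: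
  fixes f :: "'a::real_inner \<Rightarrow> real"
  assumes f': "\<And>y. (f has_derivative (\<lambda>v. G y \<bullet> v)) (at y)" and "0 < t"
  obtains \<xi> where "0 < \<xi>" "\<xi> < t"
    "f (x + t *\<^sub>R h + t *\<^sub>R k) - f (x + t *\<^sub>R h) - f (x + t *\<^sub>R k) + f x
       = t * ((G (x + \<xi> *\<^sub>R h + t *\<^sub>R k) - G (x + \<xi> *\<^sub>R h)) \<bullet> h)"
proof -
  define \<psi> where "\<psi> s = f (x + s *\<^sub>R h + t *\<^sub>R k) - f (x + s *\<^sub>R h)" for s
  define \<psi>' where "\<psi>' s = (G (x + s *\<^sub>R h + t *\<^sub>R k) - G (x + s *\<^sub>R h)) \<bullet> h" for s
  have "(\<psi> has_real_derivative \<psi>' s) (at s)" for s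
  proof -
    have "(\<psi> has_derivative
        (\<lambda>d. G (x + s *\<^sub>R h + t *\<^sub>R k) \<bullet> (d *\<^sub>R h) - G (x + s *\<^sub>R h) \<bullet> (d *\<^sub>R h))) (at s)"
      unfolding \<psi>_def
      by (intro has_derivative_diff has_derivative_compose[OF _ f'] derivative_eq_intros) auto
    then show ?thesis
      unfolding \<psi>'_def
      by (rule has_derivative_imp_has_field_derivative) (simp add: inner_diff_left right_diff_distrib)
  qed
  then obtain \<xi> where "0 < \<xi>" "\<xi> < t"
      "\<psi> t - \<psi> 0 = (t - 0) * \<psi>' \<xi>"
    using MVT2[OF \<open>0 < t\<close>, of \<psi> \<psi>'] by blast
  then show ?thesis
    using that by (simp add: \<psi>_def \<psi>'_def)
qed

lemma second_difference_estimate: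
  fixes f :: "'a::real_inner \<Rightarrow> real"
  assumes f': "\<And>y. (f has_derivative (\<lambda>v. G y \<bullet> v)) (at y)" and "linear D"
    and G': "\<forall>y. norm (y - x) < \<delta> \<longrightarrow> norm (G y - G x - D (y - x)) \<le> \<epsilon> * norm (y - x)"
    and "0 < t" "t * (norm h + norm k) < \<delta>" "0 \<le> \<epsilon>"
  shows "\<bar>f (x + t *\<^sub>R h + t *\<^sub>R k) - f (x + t *\<^sub>R h) - f (x + t *\<^sub>R k) + f x - t\<^sup>2 * (D k \<bullet> h)\<bar>
           \<le> t\<^sup>2 * \<epsilon> * ((2 * norm h + norm k) * norm h)"
proof -
  obtain \<xi> where \<xi>: "0 < \<xi>" "\<xi> < t" and mvt:
    "f (x + t *\<^sub>R h + t *\<^sub>R k) - f (x + t *\<^sub>R h) - f (x + t *\<^sub>R k) + f x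
       = t * ((G (x + \<xi> *\<^sub>R h + t *\<^sub>R k) - G (x + \<xi> *\<^sub>R h)) \<bullet> h)"
    using second_difference_mean_value[OF f' \<open>0 < t\<close>] by blast
  define v1 where "v1 = \<xi> *\<^sub>R h + t *\<^sub>R k"
  define v2 where "v2 = \<xi> *\<^sub>R h"
  define e where "e v = G (x + v) - G x - D v" for v
  have norm_v2: "norm v2 \<le> t * norm h"
    using \<xi> by (simp add: v2_def mult_right_mono)
  have "norm v1 \<le> norm (\<xi> *\<^sub>R h) + norm (t *\<^sub>R k)"
    unfolding v1_def by (rule norm_triangle_ineq)
  also have "\<dots> \<le> t * norm h + t * norm k"
    using \<xi> \<open>0 < t\<close> by (simp add: mult_right_mono)
  finally have norm_v1: "norm v1 \<le> t * norm h + t * norm k" .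
  have e: "norm (e v) \<le> \<epsilon> * norm v" if "norm v \<le> t * (norm h + norm k)" for v
    using G'[rule_format, of "x + v"] that \<open>t * (norm h + norm k) < \<delta>\<close>
    by (simp add: e_def)
  have "t * norm h \<le> t * (norm h + norm k)"
    using \<open>0 < t\<close> by (simp add: mult_left_mono)
  then have e1: "norm (e v1) \<le> \<epsilon> * norm v1" and e2: "norm (e v2) \<le> \<epsilon> * norm v2"
    using norm_v1 norm_v2 by (auto intro!: e simp: distrib_left)
  have G_diff: "G (x + \<xi> *\<^sub>R h + t *\<^sub>R k) - G (x + \<xi> *\<^sub>R h) = t *\<^sub>R D k + (e v1 - e v2)"
    using \<open>linear D\<close> by (simp add: e_def v1_def v2_def add.assoc linear_add linear_scale)
  have "f (x + t *\<^sub>R h + t *\<^sub>R k) - f (x + t *\<^sub>R h) - f (x + t *\<^sub>R k) + f x - t\<^sup>2 * (D k \<bullet> h)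
      = t * ((e v1 - e v2) \<bullet> h)"
    unfolding mvt G_diff by (simp add: power2_eq_square algebra_simps)
  also have "\<bar>\<dots>\<bar> \<le> t * (norm (e v1 - e v2) * norm h)"
    using \<open>0 < t\<close> by (simp add: abs_mult Cauchy_Schwarz_ineq2)
  also have "\<dots> \<le> t * ((\<epsilon> * (t * norm h + t * norm k) + \<epsilon> * (t * norm h)) * norm h)"
  proof -
    have "norm (e v1 - e v2) \<le> \<epsilon> * norm v1 + \<epsilon> * norm v2"
      using e1 e2 norm_triangle_ineq4[of "e v1" "e v2"] by linarith
    also have "\<dots> \<le> \<epsilon> * (t * norm h + t * norm k) + \<epsilon> * (t * norm h)"
      using norm_v1 norm_v2 \<open>0 \<le> \<epsilon>\<close> by (intro add_mono mult_left_mono)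
    finally show ?thesis
      using \<open>0 < t\<close> by (intro mult_left_mono mult_right_mono) auto
  qed
  finally show ?thesis
    by (simp add: power2_eq_square algebra_simps)
qed

lemma derivative_of_gradient_asymmetry_bound:
  fixes f :: "'a::real_inner \<Rightarrow> real"
  assumes f': "\<And>y. (f has_derivative (\<lambda>v. G y \<bullet> v)) (at y)" and G': "(G has_derivative D) (at x)"
    and "\<epsilon> > 0"
  shows "\<bar>D k \<bullet> h - D h \<bullet> k\<bar> \<le> \<epsilon> * ((2 * norm h + norm k) * norm h + (2 * norm k + norm h) * norm k)"
proof -
  obtain \<delta> where "\<delta> > 0"
    and \<delta>: "\<forall>y. norm (y - x) < \<delta> \<longrightarrow> norm (G y - G x - D (y - x)) \<le> \<epsilon> * norm (y - x)"
    using G' \<open>\<epsilon> > 0\<close> unfolding has_derivative_at_alt by blast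
  define t where "t = \<delta> / (norm h + norm k + 1)"
  have "0 < norm h + norm k + 1"
    by (simp add: add_nonneg_pos)
  then have "0 < t"
    using \<open>\<delta> > 0\<close> by (simp add: t_def)
  have "t * (norm h + norm k) < t * (norm h + norm k + 1)"
    using \<open>0 < t\<close> by simp
  also have "\<dots> = \<delta>"
    using \<open>0 < norm h + norm k + 1\<close> by (simp add: t_def)
  finally have t_hk: "t * (norm h + norm k) < \<delta>" and t_kh: "t * (norm k + norm h) < \<delta>"
    by (simp_all add: add.commute)
  \<comment> \<open>The second difference is symmetric in \<open>h\<close>, \<open>k\<close> and approximates both \<open>t\<^sup>2 D k \<bullet> h\<close> and \<open>t\<^sup>2 D h \<bullet> k\<close>.\<close>
  note estimate = second_difference_estimate[OF f' has_derivative_linear[OF G'] \<delta> \<open>0 < t\<close>]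
  have "x + t *\<^sub>R k + t *\<^sub>R h = x + t *\<^sub>R h + t *\<^sub>R k"
    by (simp add: algebra_simps)
  then have "\<bar>t\<^sup>2 * (D k \<bullet> h) - t\<^sup>2 * (D h \<bullet> k)\<bar>
      \<le> t\<^sup>2 * \<epsilon> * ((2 * norm h + norm k) * norm h) + t\<^sup>2 * \<epsilon> * ((2 * norm k + norm h) * norm k)"
    using estimate[where h = h and k = k, OF t_hk] estimate[where h = k and k = h, OF t_kh] \<open>\<epsilon> > 0\<close>
    unfolding abs_le_iff by (simp only:) linarith
  also have "\<dots> = t\<^sup>2 * (\<epsilon> * ((2 * norm h + norm k) * norm h + (2 * norm k + norm h) * norm k))"
    by (simp add: algebra_simps)
  finally show ?thesis
    using \<open>0 < t\<close> by (simp add: abs_mult right_diff_distrib[symmetric])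
qed

lemma derivative_of_gradient_symmetric:
  fixes f :: "'a::real_inner \<Rightarrow> real"
  assumes f': "\<And>y. (f has_derivative (\<lambda>v. G y \<bullet> v)) (at y)" and G': "(G has_derivative D) (at x)"
  shows "D k \<bullet> h = D h \<bullet> k"
proof -
  define C where "C = (2 * norm h + norm k) * norm h + (2 * norm k + norm h) * norm k"
  have "C \<ge> 0"
    by (simp add: C_def)
  have "\<bar>D k \<bullet> h - D h \<bullet> k\<bar> \<le> 0 + \<epsilon>" if "\<epsilon> > 0" for \<epsilon>
  proof -
    have "\<epsilon> / (C + 1) > 0"
      using \<open>C \<ge> 0\<close> \<open>\<epsilon> > 0\<close> by simp
    from derivative_of_gradient_asymmetry_bound[OF f' G' this, where h = h and k = k]
    have "\<bar>D k \<bullet> h - D h \<bullet> k\<bar> \<le> \<epsilon> / (C + 1) * C"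
      by (simp only: C_def)
    also have "\<dots> \<le> \<epsilon>"
      using \<open>C \<ge> 0\<close> \<open>\<epsilon> > 0\<close> by (simp add: field_simps)
    finally show ?thesis by simp
  qed
  then show ?thesis
    using field_le_epsilon[of "\<bar>D k \<bullet> h - D h \<bullet> k\<bar>" 0] by simp
qed

lemma has_derivative_grad:
  fixes f :: "real^'n \<Rightarrow> real"
  assumes "f differentiable at x"
  shows "(f has_derivative (\<lambda>v. grad f x \<bullet> v)) (at x)"
proof -
  let ?F = "frechet_derivative f (at x)"
  have F: "(f has_derivative ?F) (at x)"
    using assms frechet_derivative_works by blast
  have "?F v = grad f x \<bullet> v" for v
  proof -
    have "?F v = ?F (\<Sum>i\<in>UNIV. v $ i *\<^sub>R axis i 1)"
      by (simp add: basis_expansion[of v, unfolded scalar_mult_eq_scaleR])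
    also have "\<dots> = (\<Sum>i\<in>UNIV. v $ i * ?F (axis i 1))"
      using has_derivative_linear[OF F] by (simp add: linear_sum linear_scale)
    also have "\<dots> = grad f x \<bullet> v"
      by (simp add: grad_def inner_vec_def mult.commute)
    finally show ?thesis .
  qed
  then have "?F = (\<lambda>v. grad f x \<bullet> v)" ..
  then show ?thesis
    using F by simp
qed

lemma has_derivative_grad_hess:
  fixes f :: "real^'n \<Rightarrow> real"
  assumes "grad f differentiable at x"
  shows "(grad f has_derivative (\<lambda>v. hess f x *v v)) (at x)"
proof -
  have D: "(grad f has_derivative frechet_derivative (grad f) (at x)) (at x)"
    using assms frechet_derivative_works by blast
  then show ?thesis
    unfolding hess_def by (simp add: matrix_works has_derivative_linear[OF D] eta_contract_eq)
qed

lemma hess_eqI: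
  fixes F :: "real^'n \<Rightarrow> real"
  assumes "(grad F has_derivative (\<lambda>v. M *v v)) (at x)"
  shows "hess F x = M"
  using frechet_derivative_at[OF assms, symmetric]
  by (simp add: hess_def matrix_of_matrix_vector_mul)

lemma hess_symmetric:
  fixes f :: "real^'n \<Rightarrow> real"
  assumes "twice_differentiable f"
  shows "transpose (hess f x) = hess f x"
proof (rule symmetric_matrixI)
  fix u v
  have "(hess f x *v u) \<bullet> v = (hess f x *v v) \<bullet> u"
    by (rule derivative_of_gradient_symmetric[where f = f])
      (use assms in \<open>auto simp: twice_differentiable_def
        intro: has_derivative_grad has_derivative_grad_hess\<close>)
  then show "(hess f x *v u) \<bullet> v = u \<bullet> (hess f x *v v)"
    by (simp add: inner_commute)
qed

lemma grad_compose:
  fixes f :: "real^'n \<Rightarrow> real" and \<phi> :: "real \<Rightarrow> real"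
  assumes "f differentiable at x" "\<phi> differentiable at (f x)"
  shows "grad (\<phi> \<circ> f) x = deriv \<phi> (f x) *\<^sub>R grad f x"
proof -
  have "(\<phi> has_derivative (\<lambda>d. deriv \<phi> (f x) * d)) (at (f x))"
    using assms(2) DERIV_deriv_iff_real_differentiable has_field_derivative_def by blast
  from has_derivative_compose[OF has_derivative_grad[OF assms(1)] this]
  have "((\<phi> \<circ> f) has_derivative (\<lambda>v. deriv \<phi> (f x) * (grad f x \<bullet> v))) (at x)"
    by (simp add: o_def)
  then have "frechet_derivative (\<phi> \<circ> f) (at x) = (\<lambda>v. deriv \<phi> (f x) * (grad f x \<bullet> v))"
    by (rule frechet_derivative_at[symmetric])
  then show ?thesis
    by (simp add: grad_def vec_eq_iff inner_axis)
qed

lemma hess_compose: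
  fixes f :: "real^'n \<Rightarrow> real" and \<phi> :: "real \<Rightarrow> real"
  assumes f: "twice_differentiable f" and \<phi>: "twice_differentiable_real \<phi>"
  shows "hess (\<phi> \<circ> f) x = deriv \<phi> (f x) *\<^sub>R hess f x
           + deriv (deriv \<phi>) (f x) *\<^sub>R outer (grad f x) (grad f x)"
proof (rule hess_eqI)
  have "grad (\<phi> \<circ> f) = (\<lambda>y. deriv \<phi> (f y) *\<^sub>R grad f y)"
    using f \<phi> grad_compose unfolding twice_differentiable_def twice_differentiable_real_def by blast
  moreover have "(deriv \<phi> has_derivative (\<lambda>d. deriv (deriv \<phi>) (f x) * d)) (at (f x))"
    using \<phi> DERIV_deriv_iff_real_differentiable has_field_derivative_def
    unfolding twice_differentiable_real_def by blast
  then have "((\<lambda>y. deriv \<phi> (f y)) has_derivative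
      (\<lambda>v. deriv (deriv \<phi>) (f x) * (grad f x \<bullet> v))) (at x)"
    using has_derivative_compose[OF has_derivative_grad] f unfolding twice_differentiable_def by blast
  from has_derivative_scaleR[OF this has_derivative_grad_hess]
  have "((\<lambda>y. deriv \<phi> (f y) *\<^sub>R grad f y) has_derivative
      (\<lambda>v. deriv \<phi> (f x) *\<^sub>R (hess f x *v v)
          + (deriv (deriv \<phi>) (f x) * (grad f x \<bullet> v)) *\<^sub>R grad f x)) (at x)"
    using f unfolding twice_differentiable_def by blast
  ultimately show "(grad (\<phi> \<circ> f) has_derivative (\<lambda>v. (deriv \<phi> (f x) *\<^sub>R hess f x
      + deriv (deriv \<phi>) (f x) *\<^sub>R outer (grad f x) (grad f x)) *v v)) (at x)"
    by (simp add: matrix_vector_mult_add_rdistrib scaleR_matrix_vector_assoc[symmetric]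
        outer_mult_vector)
qed

section \<open>Newton steps on a composition\<close>

lemma newton_direction_compose:
  fixes f :: "real^'n \<Rightarrow> real" and \<phi> :: "real \<Rightarrow> real"
  assumes "twice_differentiable f" "twice_differentiable_real \<phi>" "deriv \<phi> (f x) \<noteq> 0"
    and "1 + deriv (deriv \<phi>) (f x) / deriv \<phi> (f x) * dual_norm_sq f x (grad f x) \<noteq> 0"
    and "grad f x \<in> range (\<lambda>v. hess f x *v v)"
  shows "pinv (hess (\<phi> \<circ> f) x) *v grad (\<phi> \<circ> f) x
    = inverse (1 + deriv (deriv \<phi>) (f x) / deriv \<phi> (f x) * dual_norm_sq f x (grad f x))
        *\<^sub>R (pinv (hess f x) *v grad f x)"
proof -
  have "grad (\<phi> \<circ> f) x = deriv \<phi> (f x) *\<^sub>R grad f x"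
    using assms(1,2) grad_compose
    unfolding twice_differentiable_def twice_differentiable_real_def by blast
  then show ?thesis
    using pinv_rank_one_update[OF hess_symmetric[OF assms(1)]] assms(3-5)
    by (simp add: hess_compose[OF assms(1,2)] dual_norm_sq_def)
qed

lemma newton_eqI:
  assumes "\<And>x. x \<in> range (newton F \<beta> x0) \<Longrightarrow>
      \<beta> x *\<^sub>R (pinv (hess F x) *v grad F x) = \<gamma> x *\<^sub>R (pinv (hess G x) *v grad G x)"
  shows "newton F \<beta> x0 k = newton G \<gamma> x0 k"
proof (induction k)
  case (Suc k)
  have "newton F \<beta> x0 k \<in> range (newton F \<beta> x0)"
    by simp
  from assms[OF this] Suc.IH show ?case
    by (simp add: Let_def)
qed simp

theorem corollary1:
  fixes f :: "real^'d \<Rightarrow> real" and \<phi> :: "real \<Rightarrow> real"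
    and \<alpha>\<phi> :: "real^'d \<Rightarrow> real" and x0 :: "real^'d"
  assumes "twice_differentiable f"
    and "twice_differentiable_real \<phi>"
  defines "L \<equiv> \<phi> \<circ> f"
    and "\<alpha> \<equiv> (\<lambda>x. \<alpha>\<phi> x * inverse (1 + deriv (deriv \<phi>) (f x) / deriv \<phi> (f x) * dual_norm_sq f x (grad f x)))"
  assumes defined: "\<And>k. deriv \<phi> (f (newton f \<alpha> x0 k)) \<noteq> 0 \<and>
       1 + deriv (deriv \<phi>) (f (newton f \<alpha> x0 k)) / deriv \<phi> (f (newton f \<alpha> x0 k))
           * dual_norm_sq f (newton f \<alpha> x0 k) (grad f (newton f \<alpha> x0 k)) \<noteq> 0"
    and range: "\<And>k. grad f (newton f \<alpha> x0 k) \<in> range (\<lambda>v. hess f (newton f \<alpha> x0 k) *v v)"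
  shows "\<forall>k. newton f \<alpha> x0 k = newton L \<alpha>\<phi> x0 k"
proof
  fix k
  show "newton f \<alpha> x0 k = newton L \<alpha>\<phi> x0 k"
  proof (rule newton_eqI)
    fix x
    assume "x \<in> range (newton f \<alpha> x0)"
    then obtain j where "x = newton f \<alpha> x0 j"
      by blast
    then show "\<alpha> x *\<^sub>R (pinv (hess f x) *v grad f x) = \<alpha>\<phi> x *\<^sub>R (pinv (hess L x) *v grad L x)"
      using newton_direction_compose[OF assms(1,2)] defined[of j] range[of j]
      by (simp add: L_def \<alpha>_def)
  qed
qed

end
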